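(* Let $\mathbf{D}\in\mathbb{R}^{N\times N}$, $\mathbf{H}\in\mathbb{R}^{N\times L}$, $\mathbf{A}\in\mathbb{R}^{m\times N}$ with $m<N$, and consider the system $\mathbf{x}_k=\mathbf{D}\mathbf{x}_{k-1}+\mathbf{H}\mathbf{h}_k$, $\mathbf{y}_k=\mathbf{A}\mathbf{x}_k$, with unconstrained inputs $\mathbf{h}_k\in\mathbb{R}^L$. If the system is output controllable, then for all $\lambda\in\mathbb{C}$ the matrix $\mathbf{A}\begin{bmatrix}\lambda\mathbf{I}-\mathbf{D} & \mathbf{H}\end{bmatrix}\in\mathbb{C}^{m\times(N+L)}$ has rank $m$.
   Context: The system is output controllable if for every initial state $\mathbf{x}_0\in\mathbb{R}^N$ and every desired output $\mathbf{y}\in\mathbb{R}^m$ there exist a finite $K$ and inputs $\mathbf{h}_1,\dots,\mathbf{h}_K\in\mathbb{R}^L$ such that $\mathbf{y}_K=\mathbf{A}\mathbf{x}_K=\mathbf{y}$. *)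

theory Defs
  imports "HOL-Analysis.Analysis"
begin

primrec state :: "real^'n^'n \<Rightarrow> real^'l^'n \<Rightarrow> real^'n \<Rightarrow> (nat \<Rightarrow> real^'l) \<Rightarrow> nat \<Rightarrow> real^'n" where
  "state D H x0 h 0 = x0"
| "state D H x0 h (Suc k) = D *v state D H x0 h k + H *v h (Suc k)"

definition output_controllable :: "real^'n^'n \<Rightarrow> real^'l^'n \<Rightarrow> real^'n^'m \<Rightarrow> bool" where
  "output_controllable D H A \<longleftrightarrow>
     (\<forall>x0 y. \<exists>K h. A *v state D H x0 h K = y)"

definition cmat :: "real^'c^'r \<Rightarrow> complex^'c^'r" where
  "cmat M = (\<chi> i j. complex_of_real (M $ i $ j))"

definition pbh_block :: "complex \<Rightarrow> real^'n^'n \<Rightarrow> real^'l^'n \<Rightarrow> complex^('n + 'l)^'n" where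
  "pbh_block z D H = (\<chi> i j. case j of
       Inl c \<Rightarrow> (if i = c then z else 0) - complex_of_real (D $ i $ c)
     | Inr c \<Rightarrow> complex_of_real (H $ i $ c))"

end

(*
  Popov-Belevitch-Hautus argument. If a row vector w annihilates A [\<lambda>I - D, H], then v = w A
  is a left eigenvector of D for \<lambda> with v H = 0, so v x\<^sub>k = \<lambda>\<^sup>k v x\<^sub>0 along every trajectory.
  Starting from x\<^sub>0 = 0 this gives w y\<^sub>K = 0 for every reachable output y\<^sub>K; since every output
  is reachable, w = 0, i.e. the rows of A [\<lambda>I - D, H] are independent.
*)
theory Submission
  imports Defs
begin

lemma full_row_rank_if_left_null_trivial:
  fixes M :: "'a::field^'k^'m"
  assumes "\<And>w. w v* M = 0 \<Longrightarrow> w = 0"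
  shows "rank M = CARD('m)"
proof -
  have inj: "inj ((*v) (transpose M))"
    using assms by (simp add: vec.inj_iff_eq_0)
  have "transpose M *v axis i 1 = row i M" for i
    by (simp add: vec_eq_iff matrix_vector_mult_def transpose_def row_def axis_def
        if_distrib cong: if_cong)
  then have "(*v) (transpose M) ` range (\<lambda>i. axis i 1) = range (\<lambda>i. row i M)"
    by (simp only: image_image)
  then have rows: "rows M = (*v) (transpose M) ` cart_basis"
    by (simp only: rows_def cart_basis_def Setcompr_eq_image)
  have "rank M = vec.dim (cart_basis :: ('a^'m) set)"
    unfolding row_rank_def_gen rows
    by (rule vec.dim_image_eq, rule matrix_vector_mul_linear_gen) (use inj inj_on_subset in blast)
  also have "\<dots> = CARD('m)"
    by (simp add: vec.dim_eq_card_independent independent_cart_basis card_cart_basis)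
  finally show ?thesis .
qed

text \<open>The complex bilinear pairing v^T x. The library's \<^const>\<open>inner\<close> on complex vectors is
  only real-bilinear and real-valued, so it cannot serve here.\<close>

definition vdot :: "'a::comm_semiring_1^'n \<Rightarrow> 'a^'n \<Rightarrow> 'a" where
  "vdot v x = (\<Sum>i\<in>UNIV. v $ i * x $ i)"

lemma vdot_add_right: "vdot v (x + y) = vdot v x + vdot v y"
  by (simp add: vdot_def distrib_left sum.distrib)

lemma vdot_scale_left: "vdot (c *s v) x = c * vdot v x"
  by (simp add: vdot_def sum_distrib_left mult.assoc)

lemma vdot_zero_left [simp]: "vdot 0 x = 0"
  by (simp add: vdot_def)

lemma vdot_zero_right [simp]: "vdot v 0 = 0"
  by (simp add: vdot_def)

lemma vdot_vector_matrix_mult: "vdot (v v* M) x = vdot v (M *v x)"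
  unfolding vdot_def vector_matrix_mult_def matrix_vector_mult_def
  by (simp add: sum_distrib_left sum_distrib_right ac_simps) (rule sum.swap)

lemma vdot_trajectory_left_eigenvector:
  fixes D :: "'a::comm_semiring_1^'n^'n" and H :: "'a^'l^'n"
  assumes step: "\<And>k. x (Suc k) = D *v x k + H *v u k"
    and eigen: "v v* D = z *s v" and annihilates: "v v* H = 0"
  shows "vdot v (x k) = z ^ k * vdot v (x 0)"
proof (induction k)
  case (Suc k)
  have "vdot v (x (Suc k)) = vdot (v v* D) (x k) + vdot (v v* H) (u k)"
    by (simp add: step vdot_add_right vdot_vector_matrix_mult)
  also have "\<dots> = z * vdot v (x k)"
    by (simp add: eigen annihilates vdot_scale_left)
  finally show ?case
    by (simp add: Suc.IH mult.assoc)
qed simp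

definition cvec :: "real^'n \<Rightarrow> complex^'n" where
  "cvec x = (\<chi> i. complex_of_real (x $ i))"

lemma cvec_zero [simp]: "cvec 0 = 0"
  by (simp add: cvec_def vec_eq_iff)

lemma cvec_add: "cvec (x + y) = cvec x + cvec y"
  by (simp add: cvec_def vec_eq_iff)

lemma cmat_mult_cvec: "cmat M *v cvec x = cvec (M *v x)"
  by (simp add: cmat_def cvec_def matrix_vector_mult_def vec_eq_iff)

lemma vdot_cvec_axis: "vdot w (cvec (axis i 1)) = w $ i"
  by (simp add: vdot_def cvec_def axis_def if_distrib cong: if_cong)

lemma vdot_cvec_state:
  assumes "v v* cmat D = z *s v" and "v v* cmat H = 0"
  shows "vdot v (cvec (state D H x0 h k)) = z ^ k * vdot v (cvec x0)"
  using vdot_trajectory_left_eigenvector[where x = "\<lambda>k. cvec (state D H x0 h k)"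
      and D = "cmat D" and H = "cmat H" and u = "\<lambda>k. cvec (h (Suc k))"] assms
  by (simp add: cvec_add cmat_mult_cvec)

lemma vector_matrix_mult_pbh_block_Inl:
  "(v v* pbh_block z D H) $ Inl c = z * v $ c - (v v* cmat D) $ c"
proof -
  have "(\<Sum>i\<in>UNIV. v $ i * (if i = c then z else 0)) = z * v $ c"
    by (simp add: mult.commute if_distrib cong: if_cong)
  then show ?thesis
    by (simp add: vector_matrix_mult_def pbh_block_def cmat_def right_diff_distrib sum_subtractf)
qed

lemma vector_matrix_mult_pbh_block_Inr:
  "(v v* pbh_block z D H) $ Inr c = (v v* cmat H) $ c"
  by (simp add: vector_matrix_mult_def pbh_block_def cmat_def)

lemma left_null_pbh_block_iff:
  "v v* pbh_block z D H = 0 \<longleftrightarrow> v v* cmat D = z *s v \<and> v v* cmat H = 0"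
  by (auto simp: vec_eq_iff split_sum_all vector_matrix_mult_pbh_block_Inl
      vector_matrix_mult_pbh_block_Inr)

theorem proposition1:
  fixes D :: "real^'n^'n" and H :: "real^'l^'n" and A :: "real^'n^'m"
  assumes "CARD('m) < CARD('n)"
    and "output_controllable D H A"
  shows "\<forall>z::complex. rank (cmat A ** pbh_block z D H) = CARD('m)"
proof
  fix z :: complex
  show "rank (cmat A ** pbh_block z D H) = CARD('m)"
  proof (rule full_row_rank_if_left_null_trivial)
    fix w
    assume "w v* (cmat A ** pbh_block z D H) = 0"
    then have eigen: "(w v* cmat A) v* cmat D = z *s (w v* cmat A)"
      and annihilates: "(w v* cmat A) v* cmat H = 0"
      by (simp_all add: left_null_pbh_block_iff flip: vector_matrix_mul_assoc)
    have "vdot w (cvec (axis i 1)) = 0" for i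
    proof -
      obtain K h where "A *v state D H 0 h K = axis i 1"
        using assms(2) unfolding output_controllable_def by blast
      then have "vdot w (cvec (axis i 1)) = vdot (w v* cmat A) (cvec (state D H 0 h K))"
        by (simp add: vdot_vector_matrix_mult cmat_mult_cvec)
      also have "\<dots> = 0"
        by (simp add: vdot_cvec_state[OF eigen annihilates])
      finally show ?thesis .
    qed
    then show "w = 0"
      by (simp add: vdot_cvec_axis vec_eq_iff)
  qed
qed

end
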